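(* Let $\oplus$ be a basic combinator whose domain is the set of all pairs of tpos over $W$. Then $\oplus$ satisfies both ($\oplus$SPU+) for all $x,y,z \in W$: if $x \prec_1 y$ and $z \prec_2 y$ then $x \prec_{1\oplus 2} y$ or $z \prec_{1\oplus 2} y$, and ($\oplus$PAR) for all $x,y \in W$: if $x \prec_{1\oplus 2} y$ then for each $i \in \{1,2\}$ there exists $z \in W$ with $x \sim_{1\oplus 2} z$ and $z \prec_i y$, (for all pairs $\langle\preceq_1,\preceq_2\rangle$) if and only if $\oplus = \oplus_{\mathrm{STQ}}$.
   Context: $W$ is a finite nonempty set (of possible worlds). A tpo is a total preorder on $W$; $\prec$, $\sim$ its strict and symmetric parts. For $S \subseteq W$, $\min(\preceq, S) = \{x \in S : x \preceq y\ \forall y \in S\}$. A combinator $\oplus$ maps pairs of tpos $\langle\preceq_1,\preceq_2\rangle$ to a tpo $\preceq_{1\oplus 2}$; it is basic if $\min(\preceq_{1\oplus 2}, W) = \min(\preceq_1, W) \cup \min(\preceq_2, W)$ for all pairs. The Synchronous TeamQueue combinator $\oplus_{\mathrm{STQ}}$ maps $\langle\preceq_1,\preceq_2\rangle$ to the tpo whose ordered partition into ranks (most plausible first) is $\langle T_1,\ldots,T_m\rangle$, where $T_i = \min(\preceq_1, R_i) \cup \min(\preceq_2, R_i)$ with $R_i = \bigcap_{k<i} T_k^c$ ($T^c$ the complement in $W$), and $m$ is minimal with $\bigcup_{i\le m} T_i = W$. *)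

theory Defs
  imports Main
begin

text \<open>The set W of worlds is a finite (nonempty, as every type) type 'w.
  Binary relations on W are represented as curried predicates; r x y reads "x \<preceq> y".\<close>

type_synonym 'w rel = "'w \<Rightarrow> 'w \<Rightarrow> bool"

definition tpo :: "'w rel \<Rightarrow> bool" where
  "tpo r \<longleftrightarrow> (\<forall>x y. r x y \<or> r y x) \<and> (\<forall>x y z. r x y \<longrightarrow> r y z \<longrightarrow> r x z)"

definition strict :: "'w rel \<Rightarrow> 'w rel" where
  "strict r x y \<longleftrightarrow> r x y \<and> \<not> r y x"

definition equiv_part :: "'w rel \<Rightarrow> 'w rel" where
  "equiv_part r x y \<longleftrightarrow> r x y \<and> r y x"

definition minset :: "'w rel \<Rightarrow> 'w set \<Rightarrow> 'w set" where
  "minset r S = {x \<in> S. \<forall>y \<in> S. r x y}"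

definition combinator :: "('w rel \<Rightarrow> 'w rel \<Rightarrow> 'w rel) \<Rightarrow> bool" where
  "combinator c \<longleftrightarrow> (\<forall>r1 r2. tpo r1 \<and> tpo r2 \<longrightarrow> tpo (c r1 r2))"

definition basic :: "('w rel \<Rightarrow> 'w rel \<Rightarrow> 'w rel) \<Rightarrow> bool" where
  "basic c \<longleftrightarrow> (\<forall>r1 r2. tpo r1 \<and> tpo r2 \<longrightarrow>
     minset (c r1 r2) UNIV = minset r1 UNIV \<union> minset r2 UNIV)"

definition SPU_plus :: "('w rel \<Rightarrow> 'w rel \<Rightarrow> 'w rel) \<Rightarrow> bool" where
  "SPU_plus c \<longleftrightarrow> (\<forall>r1 r2. tpo r1 \<and> tpo r2 \<longrightarrow>
     (\<forall>x y z. strict r1 x y \<and> strict r2 z y \<longrightarrow>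
        strict (c r1 r2) x y \<or> strict (c r1 r2) z y))"

definition PAR :: "('w rel \<Rightarrow> 'w rel \<Rightarrow> 'w rel) \<Rightarrow> bool" where
  "PAR c \<longleftrightarrow> (\<forall>r1 r2. tpo r1 \<and> tpo r2 \<longrightarrow>
     (\<forall>x y. strict (c r1 r2) x y \<longrightarrow>
        (\<forall>ri \<in> {r1, r2}. \<exists>z. equiv_part (c r1 r2) x z \<and> strict ri z y)))"

text \<open>Synchronous TeamQueue.  stq_R r1 r2 i is R_{i+1} of the paper (0-indexed):
  R_0 = W, R_{i+1} = R_i \<inter> (T_i)^c, which equals \<Inter>_{k\<le>i} (T_k)^c;
  T_i = min(r1,R_i) \<union> min(r2,R_i).\<close>
fun stq_R :: "'w rel \<Rightarrow> 'w rel \<Rightarrow> nat \<Rightarrow> 'w set" where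
  "stq_R r1 r2 0 = UNIV"
| "stq_R r1 r2 (Suc i) = stq_R r1 r2 i - (minset r1 (stq_R r1 r2 i) \<union> minset r2 (stq_R r1 r2 i))"

definition stq_T :: "'w rel \<Rightarrow> 'w rel \<Rightarrow> nat \<Rightarrow> 'w set" where
  "stq_T r1 r2 i = minset r1 (stq_R r1 r2 i) \<union> minset r2 (stq_R r1 r2 i)"

definition stq_rank :: "'w rel \<Rightarrow> 'w rel \<Rightarrow> 'w \<Rightarrow> nat" where
  "stq_rank r1 r2 x = (LEAST i. x \<in> stq_T r1 r2 i)"

definition STQ :: "'w rel \<Rightarrow> 'w rel \<Rightarrow> 'w rel" where
  "STQ r1 r2 x y \<longleftrightarrow> stq_rank r1 r2 x \<le> stq_rank r1 r2 y"

end

theory Submission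
  imports Defs
begin

text \<open>STQ itself satisfies SPU+ because
  a world y that is beaten by something in block rank(y) under both orders cannot be minimal for
  either, and PAR because every world outside T_i is beaten, in each order, by a minimal element of
  R_i, which lies in T_i. Conversely, for a tpo satisfying SPU+ and PAR one shows by strong induction
  on rank that lower rank means strictly more plausible: PAR pulls a counterexample below a minimal
  element of its block, and SPU+ lifts the two minimal witnesses beating y to a strict comparison.\<close>

lemma minset_nonempty:
  assumes "finite S" "S \<noteq> {}" "tpo r"
  shows "minset r S \<noteq> {}"
  using assms(1,2)
proof (induction S rule: finite_ne_induct)
  case (singleton x)
  then show ?case using assms(3) by (auto simp: minset_def tpo_def)
next
  case (insert x F)
  then obtain m where m: "m \<in> minset r F" by auto
  show ?case
  proof (cases "r x m")
    case True
    then have "x \<in> minset r (insert x F)" using m assms(3)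
      unfolding minset_def tpo_def by blast
    then show ?thesis by auto
  next
    case False
    then have "m \<in> minset r (insert x F)" using m assms(3)
      unfolding minset_def tpo_def by blast
    then show ?thesis by auto
  qed
qed

lemma ex_minset_strict_below:
  assumes "finite S" "tpo r" "y \<in> S" "y \<notin> minset r S"
  shows "\<exists>w \<in> minset r S. strict r w y"
proof -
  obtain w where w: "w \<in> minset r S" using minset_nonempty[of S r] assms by auto
  obtain v where v: "v \<in> S" "\<not> r y v" using assms(3,4) by (auto simp: minset_def)
  have "r w v" using w v by (auto simp: minset_def)
  then have "\<not> r y w" using v assms(2) unfolding tpo_def by blast
  then show ?thesis using w assms(2) unfolding strict_def tpo_def by blast
qed

lemma strict_trans_left: "tpo r \<Longrightarrow> r x w \<Longrightarrow> strict r w y \<Longrightarrow> strict r x y"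
  unfolding tpo_def strict_def by blast

lemma stq_R_iff: "x \<in> stq_R r1 r2 i \<longleftrightarrow> (\<forall>k<i. x \<notin> stq_T r1 r2 k)"
  by (induction i) (auto simp: stq_T_def less_Suc_eq)

lemma stq_T_subset_R: "stq_T r1 r2 i \<subseteq> stq_R r1 r2 i"
  by (auto simp: stq_T_def minset_def)

lemma card_stq_R:
  assumes "tpo (r1 :: 'w::finite rel)" "stq_R r1 r2 i \<noteq> {}"
  shows "card (stq_R r1 r2 i) + i \<le> card (UNIV :: 'w set)"
  using assms(2)
proof (induction i)
  case 0
  then show ?case by (simp add: card_mono)
next
  case (Suc i)
  have ne: "stq_R r1 r2 i \<noteq> {}" using Suc.prems by auto
  have "minset r1 (stq_R r1 r2 i) \<noteq> {}"
    using minset_nonempty[OF _ ne assms(1)] by simp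
  then have "stq_R r1 r2 (Suc i) \<subset> stq_R r1 r2 i"
    by (auto simp: minset_def)
  then have "card (stq_R r1 r2 (Suc i)) < card (stq_R r1 r2 i)"
    by (simp add: psubset_card_mono)
  then show ?case using Suc.IH[OF ne] by simp
qed

lemma ex_stq_T:
  assumes "tpo (r1 :: 'w::finite rel)"
  shows "\<exists>i. x \<in> stq_T r1 r2 i"
proof (rule ccontr)
  assume "\<not> ?thesis"
  then have "x \<in> stq_R r1 r2 (Suc (card (UNIV :: 'w set)))" by (simp del: stq_R.simps add: stq_R_iff)
  then show False using card_stq_R[OF assms, of r2 "Suc (card (UNIV :: 'w set))"] by auto
qed

lemma stq_T_rank: "tpo (r1 :: 'w::finite rel) \<Longrightarrow> x \<in> stq_T r1 r2 (stq_rank r1 r2 x)"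
  unfolding stq_rank_def using ex_stq_T by (metis LeastI_ex)

lemma stq_rank_le: "x \<in> stq_T r1 r2 k \<Longrightarrow> stq_rank r1 r2 x \<le> k"
  unfolding stq_rank_def by (rule Least_le)

lemma stq_R_iff_rank:
  assumes "tpo (r1 :: 'w::finite rel)"
  shows "x \<in> stq_R r1 r2 i \<longleftrightarrow> i \<le> stq_rank r1 r2 x"
  unfolding stq_R_iff using stq_T_rank[OF assms] stq_rank_le by (meson le_trans not_le)

lemma stq_T_iff_rank:
  assumes "tpo (r1 :: 'w::finite rel)"
  shows "x \<in> stq_T r1 r2 i \<longleftrightarrow> i = stq_rank r1 r2 x"
  using stq_T_rank[OF assms] stq_rank_le stq_R_iff_rank[OF assms] stq_T_subset_R
  by (metis le_antisym subsetD)

lemma ex_stq_T_strict_below: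
  assumes "tpo (r1 :: 'w::finite rel)" "ri \<in> {r1, r2}" "tpo ri"
    and "stq_rank r1 r2 x < stq_rank r1 r2 y"
  shows "\<exists>w. stq_rank r1 r2 w = stq_rank r1 r2 x \<and> strict ri w y"
proof -
  let ?i = "stq_rank r1 r2 x"
  have "y \<in> stq_R r1 r2 ?i" "y \<notin> stq_T r1 r2 ?i"
    using assms(4) stq_R_iff_rank[OF assms(1)] stq_T_iff_rank[OF assms(1)] by auto
  then obtain w where "w \<in> minset ri (stq_R r1 r2 ?i)" "strict ri w y"
    using ex_minset_strict_below[OF _ assms(3)] assms(2) by (auto simp: stq_T_def)
  moreover from this(1) have "w \<in> stq_T r1 r2 ?i"
    using assms(2) by (auto simp: stq_T_def)
  ultimately show ?thesis using stq_T_iff_rank[OF assms(1)] by auto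
qed

lemma STQ_SPU_plus:
  assumes "tpo (r1 :: 'w::finite rel)" "strict r1 x y" "strict r2 z y"
  shows "strict (STQ r1 r2) x y \<or> strict (STQ r1 r2) z y"
proof (rule ccontr)
  let ?i = "stq_rank r1 r2 y"
  assume "\<not> ?thesis"
  then have "x \<in> stq_R r1 r2 ?i" "z \<in> stq_R r1 r2 ?i"
    using stq_R_iff_rank[OF assms(1)] by (auto simp: strict_def STQ_def)
  moreover have "y \<in> stq_T r1 r2 ?i" using stq_T_rank[OF assms(1)] .
  ultimately show False using assms(2,3) by (auto simp: stq_T_def minset_def strict_def)
qed

lemma STQ_PAR:
  assumes "tpo (r1 :: 'w::finite rel)" "tpo r2" "strict (STQ r1 r2) x y" "ri \<in> {r1, r2}"
  shows "\<exists>z. equiv_part (STQ r1 r2) x z \<and> strict ri z y"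
proof -
  have "tpo ri" using assms(1,2,4) by auto
  moreover have "stq_rank r1 r2 x < stq_rank r1 r2 y"
    using assms(3) by (auto simp: strict_def STQ_def)
  ultimately obtain z where "stq_rank r1 r2 z = stq_rank r1 r2 x" "strict ri z y"
    using ex_stq_T_strict_below[OF assms(1,4)] by blast
  then show ?thesis unfolding equiv_part_def STQ_def by (metis order_refl)
qed

context
  fixes r1 r2 r :: "'w::finite rel"
  assumes tpo1: "tpo r1" and tpo2: "tpo r2" and tpo: "tpo r"
    and SPU: "\<And>x y z. strict r1 x y \<Longrightarrow> strict r2 z y \<Longrightarrow> strict r x y \<or> strict r z y"
    and PAR: "\<And>x y ri. strict r x y \<Longrightarrow> ri \<in> {r1, r2} \<Longrightarrow> \<exists>z. equiv_part r x z \<and> strict ri z y"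
begin

lemma le_of_stq_rank:
  assumes lower: "\<And>z y. stq_rank r1 r2 z < stq_rank r1 r2 y \<Longrightarrow> stq_rank r1 r2 z < n \<Longrightarrow> strict r z y"
    and "stq_rank r1 r2 x = n" "n \<le> stq_rank r1 r2 y"
  shows "r x y"
proof (rule ccontr)
  assume "\<not> r x y"
  then have "strict r y x" using tpo by (auto simp: tpo_def strict_def)
  obtain ri where ri: "ri \<in> {r1, r2}" "x \<in> minset ri (stq_R r1 r2 n)"
    using assms(2) stq_T_rank[OF tpo1, of x r2] by (auto simp: stq_T_def)
  obtain z where z: "equiv_part r y z" "strict ri z x"
    using PAR[OF \<open>strict r y x\<close> ri(1)] by blast
  have "n \<le> stq_rank r1 r2 z"
  proof (rule ccontr)
    assume "\<not> n \<le> stq_rank r1 r2 z"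
    then have "strict r z y" using lower assms(3) by simp
    then show False using z(1) by (auto simp: strict_def equiv_part_def)
  qed
  then have "ri x z" using ri(2) stq_R_iff_rank[OF tpo1] by (auto simp: minset_def)
  then show False using z(2) by (auto simp: strict_def)
qed

lemma strict_of_stq_rank_less:
  "stq_rank r1 r2 x < stq_rank r1 r2 y \<Longrightarrow> strict r x y"
proof (induction "stq_rank r1 r2 x" arbitrary: x y rule: less_induct)
  case less
  let ?n = "stq_rank r1 r2 x"
  obtain w1 w2 where w: "stq_rank r1 r2 w1 = ?n" "strict r1 w1 y"
      "stq_rank r1 r2 w2 = ?n" "strict r2 w2 y"
    using ex_stq_T_strict_below[OF tpo1 _ _ less.prems] tpo1 tpo2 by blast
  have "r x w1" "r x w2"
    using le_of_stq_rank[OF less.hyps] w by auto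
  then show ?case using SPU[OF w(2,4)] strict_trans_left[OF tpo] by blast
qed

lemma eq_STQ: "r = STQ r1 r2"
proof (intro ext)
  fix x y
  show "r x y = STQ r1 r2 x y"
  proof (cases "stq_rank r1 r2 x \<le> stq_rank r1 r2 y")
    case True
    then show ?thesis
      using le_of_stq_rank[OF strict_of_stq_rank_less] by (simp add: STQ_def)
  next
    case False
    then show ?thesis
      using strict_of_stq_rank_less[of y x] by (auto simp: STQ_def strict_def)
  qed
qed

end

theorem theorem2:
  fixes c :: "'w::finite rel \<Rightarrow> 'w rel \<Rightarrow> 'w rel"
  assumes "combinator c"
    and "basic c"
  shows "(SPU_plus c \<and> PAR c) \<longleftrightarrow> (\<forall>r1 r2. tpo r1 \<and> tpo r2 \<longrightarrow> c r1 r2 = STQ r1 r2)"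
proof
  assume "SPU_plus c \<and> PAR c"
  then show "\<forall>r1 r2. tpo r1 \<and> tpo r2 \<longrightarrow> c r1 r2 = STQ r1 r2"
    using assms(1) eq_STQ unfolding SPU_plus_def PAR_def combinator_def by metis
next
  assume "\<forall>r1 r2. tpo r1 \<and> tpo r2 \<longrightarrow> c r1 r2 = STQ r1 r2"
  then show "SPU_plus c \<and> PAR c"
    unfolding SPU_plus_def PAR_def using STQ_SPU_plus STQ_PAR by metis
qed

end
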